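(* Let $I,S:\mathbb{R}\to\mathbb{R}$ be $2\pi$-periodic Lipschitz functions with $I(\theta)\ge\rho$ for all $\theta$, for some $\rho>0$, and $\min_{[-\pi,\pi]}S<0<\max_{[-\pi,\pi]}S$. Let $(\theta_i(t))$ solve $\dot\theta_i=\omega_i+\frac{\kappa}{N}\sum_{j=1}^NI(\theta_j)S(\theta_i)$, $\theta_i(0)=\theta_i^0$. Fix $\mathcal B\subset\{1,\dots,N\}$ and let $\|\Omega_{\mathcal B}\|_\infty=\max_{i\in\mathcal B}|\omega_i|$. If \[ \kappa>\frac{\|\Omega_{\mathcal B}\|_\infty}{\rho\min\{-\min S,\max S\}}, \] then $\sup_{t\ge0}\theta_i(t)-\inf_{t\ge0}\theta_i(t)<2\pi$ for all $i\in\mathcal B$. *)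

theory Defs
  imports "HOL-Analysis.Analysis"
begin

end

(*
  Let S attain its minimum at a and its maximum at b. The coupling factor
  kappa/N * sum_j I(theta_j) is at least kappa * rho, so the threshold on kappa makes
  the drift of theta_i negative whenever theta_i = a (mod 2 pi) and positive whenever
  theta_i = b (mod 2 pi): theta_i can never cross a level a + 2 pi k upwards nor a level
  b + 2 pi k downwards. Let A be the first such a-level above theta_i(0) and B the b-level
  in (A - 2 pi, A). Then theta_i stays below A, and either it reaches B and afterwards
  stays above B, or it reaches A - 2 pi and afterwards stays below A - 2 pi, or it stays
  in (A - 2 pi, B) for ever. In the first two cases the extremum of theta_i over the
  initial time interval, which lies strictly between the neighbouring levels, bounds
  the oscillation by less than 2 pi.
*)
theory Submission
  imports Defs "HOL-Library.Periodic_Fun"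
begin

lemma stays_strictly_below_level:
  fixes f D :: "real \<Rightarrow> real"
  assumes der: "\<And>t. t \<ge> 0 \<Longrightarrow> (f has_real_derivative D t) (at t within {0..})"
    and crossing: "\<And>t. t \<ge> 0 \<Longrightarrow> f t = c \<Longrightarrow> D t < 0"
    and "0 \<le> s" "s \<le> t" "f s < c"
  shows "f t < c"
proof (rule ccontr)
  assume "\<not> f t < c"
  have "continuous_on {0..} f"
    using der by (intro DERIV_continuous_on) auto
  then have cont: "continuous_on {s..t} f"
    by (rule continuous_on_subset) (use \<open>0 \<le> s\<close> in auto)
  define T where "T = {r \<in> {s..t}. f r = c}"
  have "T \<noteq> {}"
    using IVT'[of f s c t] cont \<open>s \<le> t\<close> \<open>f s < c\<close> \<open>\<not> f t < c\<close> unfolding T_def by auto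
  moreover have "compact T"
    using compact_Int_closed[OF compact_Icc[of s t]
        continuous_closed_preimage_constant[OF cont closed_atLeastAtMost, of c]]
    unfolding T_def by (simp add: Int_absorb1 subset_iff)
  \<comment> \<open>At the first hitting time of c the negative derivative forces f > c just before,
    so by the intermediate value theorem c was hit even earlier.\<close>
  ultimately obtain \<tau> where "\<tau> \<in> T" and first: "\<And>r. r \<in> T \<Longrightarrow> \<tau> \<le> r"
    using compact_attains_inf by metis
  then have "f \<tau> = c" "s \<le> \<tau>" "\<tau> \<le> t"
    unfolding T_def by auto
  then have "s < \<tau>"
    using \<open>f s < c\<close> by (cases "s = \<tau>") auto
  obtain d where "d > 0" and before: "\<And>h. h > 0 \<Longrightarrow> \<tau> - h \<in> {0..} \<Longrightarrow> h < d \<Longrightarrow> f \<tau> < f (\<tau> - h)"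
    using has_real_derivative_neg_dec_left[OF der[of \<tau>] crossing[of \<tau>]]
      \<open>f \<tau> = c\<close> \<open>0 \<le> s\<close> \<open>s \<le> \<tau>\<close> by auto
  obtain h where "0 < h" "h < d" "h < \<tau> - s"
    using field_lbound_gt_zero[OF \<open>d > 0\<close>, of "\<tau> - s"] \<open>s < \<tau>\<close> by auto
  then have "c < f (\<tau> - h)"
    using before \<open>f \<tau> = c\<close> \<open>0 \<le> s\<close> by auto
  then obtain r where "s \<le> r" "r \<le> \<tau> - h" "f r = c"
    using IVT'[of f s c "\<tau> - h"] \<open>f s < c\<close> \<open>0 < h\<close> \<open>h < \<tau> - s\<close> \<open>\<tau> \<le> t\<close>
      continuous_on_subset[OF cont, of "{s..\<tau> - h}"] by auto
  then show False
    using first[of r] \<open>0 < h\<close> \<open>\<tau> \<le> t\<close> unfolding T_def by auto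
qed

lemma stays_below_level:
  fixes f D :: "real \<Rightarrow> real"
  assumes der: "\<And>t. t \<ge> 0 \<Longrightarrow> (f has_real_derivative D t) (at t within {0..})"
    and crossing: "\<And>t. t \<ge> 0 \<Longrightarrow> f t = c \<Longrightarrow> D t < 0"
    and "0 \<le> s" "s < t" "f s \<le> c"
  shows "f t < c"
proof (cases "f s < c")
  case True
  then show ?thesis
    using stays_strictly_below_level[OF der crossing] \<open>0 \<le> s\<close> \<open>s < t\<close> by auto
next
  case False
  then have "f s = c"
    using \<open>f s \<le> c\<close> by simp
  obtain d where "d > 0" and after: "\<And>h. h > 0 \<Longrightarrow> s + h \<in> {0..} \<Longrightarrow> h < d \<Longrightarrow> f (s + h) < f s"
    using has_real_derivative_neg_dec_right[OF der crossing] \<open>0 \<le> s\<close> \<open>f s = c\<close> by blast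
  obtain h where "0 < h" "h < d" "h < t - s"
    using field_lbound_gt_zero[OF \<open>d > 0\<close>, of "t - s"] \<open>s < t\<close> by auto
  then have "f (s + h) < c"
    using after \<open>f s = c\<close> \<open>0 \<le> s\<close> by auto
  then show ?thesis
    using stays_strictly_below_level[OF der crossing, where s = "s + h" and t = t]
      \<open>0 \<le> s\<close> \<open>0 < h\<close> \<open>h < t - s\<close> by auto
qed

lemma stays_above_level:
  fixes f D :: "real \<Rightarrow> real"
  assumes der: "\<And>t. t \<ge> 0 \<Longrightarrow> (f has_real_derivative D t) (at t within {0..})"
    and crossing: "\<And>t. t \<ge> 0 \<Longrightarrow> f t = c \<Longrightarrow> D t > 0"
    and "0 \<le> s" "s < t" "c \<le> f s"
  shows "c < f t"
  using stays_below_level[of "\<lambda>t. - f t" "\<lambda>t. - D t" "- c" s t] assms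
  by (auto intro: DERIV_minus)

lemma periodic_level_in_window:
  fixes a p x :: real
  assumes "p > 0"
  obtains k :: int where "x \<le> a + of_int k * p" "a + of_int k * p < x + p"
proof
  let ?k = "\<lceil>(x - a) / p\<rceil>"
  have "x - a \<le> of_int ?k * p"
    using assms le_of_int_ceiling[of "(x - a) / p"] by (simp only: pos_divide_le_eq)
  then show "x \<le> a + of_int ?k * p"
    by simp
  have "of_int ?k * p < ((x - a) / p + 1) * p"
    using assms by (intro mult_strict_right_mono) linarith+
  then show "a + of_int ?k * p < x + p"
    using assms by (simp add: distrib_right)
qed

lemma bounded_above_by_initial_max:
  fixes f :: "real \<Rightarrow> real"
  assumes "continuous_on {0..t1} f" "0 \<le> t1" and later: "\<And>t. t1 < t \<Longrightarrow> f t \<le> c"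
  obtains t0 where "t0 \<in> {0..t1}" "\<And>t. 0 \<le> t \<Longrightarrow> f t \<le> max (f t0) c"
proof -
  obtain t0 where "t0 \<in> {0..t1}" and "\<And>t. t \<in> {0..t1} \<Longrightarrow> f t \<le> f t0"
    using continuous_attains_sup[OF compact_Icc _ assms(1)] assms(2) by auto
  then show thesis
    using that later by (metis atLeastAtMost_iff linorder_not_le max.coboundedI1 max.coboundedI2)
qed

lemma bounded_below_by_initial_min:
  fixes f :: "real \<Rightarrow> real"
  assumes "continuous_on {0..t1} f" "0 \<le> t1" and later: "\<And>t. t1 < t \<Longrightarrow> c \<le> f t"
  obtains t0 where "t0 \<in> {0..t1}" "\<And>t. 0 \<le> t \<Longrightarrow> min (f t0) c \<le> f t"
proof -
  obtain t0 where "t0 \<in> {0..t1}" and "\<And>t. 0 \<le> t \<Longrightarrow> - f t \<le> max (- f t0) (- c)"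
    using bounded_above_by_initial_max[of t1 "\<lambda>t. - f t" "- c"] assms
    by (auto intro: continuous_intros)
  then show thesis
    using that by (metis minus_min_eq_max neg_le_iff_le)
qed

lemma oscillation_lt_period_between_interlaced_levels:
  fixes f :: "real \<Rightarrow> real" and A B p :: real
  assumes cont: "continuous_on {0..} f"
    and "A - p < B" "B < A" "A - p < f 0" "f 0 \<le> A"
    and below: "\<And>c s t. c \<in> {A - p, A} \<Longrightarrow> 0 \<le> s \<Longrightarrow> s < t \<Longrightarrow> f s \<le> c \<Longrightarrow> f t < c"
    and above: "\<And>c s t. c \<in> {B - p, B} \<Longrightarrow> 0 \<le> s \<Longrightarrow> s < t \<Longrightarrow> c \<le> f s \<Longrightarrow> c < f t"
  obtains lo hi where "hi - lo < p" "\<And>t. 0 \<le> t \<Longrightarrow> lo \<le> f t \<and> f t \<le> hi"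
proof -
  have le_A: "f t \<le> A" if "0 \<le> t" for t
    using below[of A 0 t] \<open>f 0 \<le> A\<close> that by (cases "t = 0") auto
  have ge_B': "B - p \<le> f t" if "0 \<le> t" for t
    using above[of "B - p" 0 t] \<open>A - p < f 0\<close> \<open>B < A\<close> that by (cases "t = 0") auto
  have cont_Icc: "continuous_on {0..t1} f" for t1
    using cont by (rule continuous_on_subset) auto
  consider (up) t1 where "0 \<le> t1" "B \<le> f t1"
    | (down) t1 where "0 \<le> t1" "f t1 \<le> A - p" "\<And>t. 0 \<le> t \<Longrightarrow> f t < B"
    | (between) "\<And>t. 0 \<le> t \<Longrightarrow> A - p < f t \<and> f t < B"
    by (metis not_le)
  then show thesis
  proof cases
    case up
    have "B \<le> f t" if "t1 < t" for t
      using above[of B t1 t] \<open>0 \<le> t1\<close> that \<open>B \<le> f t1\<close> by simp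
    then obtain t0 where "t0 \<in> {0..t1}" and low: "\<And>t. 0 \<le> t \<Longrightarrow> min (f t0) B \<le> f t"
      using bounded_below_by_initial_min[OF cont_Icc \<open>0 \<le> t1\<close>] by blast
    have "A - p < f t0"
    proof (rule ccontr)
      assume "\<not> A - p < f t0"
      then have "f t1 \<le> A - p"
        using below[of "A - p" t0 t1] \<open>t0 \<in> {0..t1}\<close> by (cases "t0 = t1") auto
      then show False
        using \<open>A - p < B\<close> \<open>B \<le> f t1\<close> by simp
    qed
    then show thesis
      using that[of A "min (f t0) B"] low le_A \<open>A - p < B\<close> by auto
  next
    case down
    have "f t \<le> A - p" if "t1 < t" for t
      using below[of "A - p" t1 t] \<open>0 \<le> t1\<close> that \<open>f t1 \<le> A - p\<close> by simp
    then obtain t0 where "t0 \<in> {0..t1}" and high: "\<And>t. 0 \<le> t \<Longrightarrow> f t \<le> max (f t0) (A - p)"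
      using bounded_above_by_initial_max[OF cont_Icc \<open>0 \<le> t1\<close>] by blast
    then show thesis
      using that[of "max (f t0) (A - p)" "B - p"] ge_B' down \<open>A - p < B\<close> by auto
  next
    case between
    show thesis
      by (rule that[of B "A - p"]) (use between \<open>B < A\<close> in \<open>auto simp: less_imp_le\<close>)
  qed
qed

lemma oscillation_lt_period_between_periodic_levels:
  fixes f :: "real \<Rightarrow> real" and a b p :: real
  assumes "p > 0" and cont: "continuous_on {0..} f"
    and below: "\<And>k s t. 0 \<le> s \<Longrightarrow> s < t \<Longrightarrow> f s \<le> a + of_int k * p \<Longrightarrow> f t < a + of_int k * p"
    and above: "\<And>k s t. 0 \<le> s \<Longrightarrow> s < t \<Longrightarrow> b + of_int k * p \<le> f s \<Longrightarrow> b + of_int k * p < f t"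
    and apart: "\<And>k. b \<noteq> a + of_int k * p"
  obtains lo hi where "hi - lo < p" "\<And>t. 0 \<le> t \<Longrightarrow> lo \<le> f t \<and> f t \<le> hi"
proof -
  obtain kA where "f 0 \<le> a + of_int kA * p" "a + of_int kA * p < f 0 + p"
    using periodic_level_in_window[OF \<open>p > 0\<close>] .
  moreover define A where "A = a + of_int kA * p"
  ultimately have "f 0 \<le> A" "A - p < f 0"
    by simp_all
  obtain kB where "A - p \<le> b + of_int kB * p" "b + of_int kB * p < A"
    using periodic_level_in_window[OF \<open>p > 0\<close>, of "A - p" b] by auto
  moreover define B where "B = b + of_int kB * p"
  ultimately have "A - p \<le> B" "B < A"
    by simp_all
  have A': "A - p = a + of_int (kA - 1) * p"
    unfolding A_def by (simp add: algebra_simps)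
  have B': "B - p = b + of_int (kB - 1) * p"
    unfolding B_def by (simp add: algebra_simps)
  have "B \<noteq> A - p"
  proof
    assume "B = A - p"
    then have "b = a + of_int (kA - 1 - kB) * p"
      unfolding A' B_def by (simp add: algebra_simps)
    then show False
      using apart by blast
  qed
  with \<open>A - p \<le> B\<close> have "A - p < B"
    by simp
  show thesis
  proof (rule oscillation_lt_period_between_interlaced_levels
      [OF cont \<open>A - p < B\<close> \<open>B < A\<close> \<open>A - p < f 0\<close> \<open>f 0 \<le> A\<close> _ _ that])
    show "f t < c" if "c \<in> {A - p, A}" "0 \<le> s" "s < t" "f s \<le> c" for c s t
      using that below[of s t kA] below[of s t "kA - 1"] unfolding A' [symmetric] A_def [symmetric] by auto
    show "c < f t" if "c \<in> {B - p, B}" "0 \<le> s" "s < t" "c \<le> f s" for c s t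
      using that above[of s t kB] above[of s t "kB - 1"] unfolding B' [symmetric] B_def [symmetric] by auto
  qed
qed

lemma oscillation_lt_period_of_periodic_drift:
  fixes f c S :: "real \<Rightarrow> real" and w a b m p :: real
  assumes der: "\<And>t. t \<ge> 0 \<Longrightarrow> (f has_real_derivative w + c t * S (f t)) (at t within {0..})"
    and per: "\<And>x. S (x + p) = S x" and "p > 0"
    and "m > 0" "S a \<le> - m" "m \<le> S b"
    and dominates: "\<And>t. t \<ge> 0 \<Longrightarrow> \<bar>w\<bar> < c t * m"
  obtains lo hi where "hi - lo < p" "\<And>t. 0 \<le> t \<Longrightarrow> lo \<le> f t \<and> f t \<le> hi"
proof -
  interpret periodic_fun_simple S p
    by standard (rule per)
  have drift: "w + c t * S a < 0" "0 < w + c t * S b" if "0 \<le> t" for t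
  proof -
    have "0 < c t * m"
      using dominates[OF that] abs_ge_zero[of w] by linarith
    then have "0 < c t"
      using zero_less_mult_pos2 \<open>m > 0\<close> by blast
    then have "c t * S a \<le> - (c t * m)" "c t * m \<le> c t * S b"
      using mult_left_mono[OF \<open>S a \<le> - m\<close>, of "c t"] mult_left_mono[OF \<open>m \<le> S b\<close>, of "c t"]
      by simp_all
    then show "w + c t * S a < 0" "0 < w + c t * S b"
      using dominates[OF that] by linarith+
  qed
  have cont: "continuous_on {0..} f"
    using der by (intro DERIV_continuous_on) auto
  have below: "f t < a + of_int k * p" if "0 \<le> s" "s < t" "f s \<le> a + of_int k * p" for k s t
  proof (rule stays_below_level[OF der _ that])
    fix t assume "0 \<le> t" "f t = a + of_int k * p"
    then show "w + c t * S (f t) < 0"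
      using drift(1)[OF \<open>0 \<le> t\<close>] by (simp add: plus_of_int)
  qed
  have above: "b + of_int k * p < f t" if "0 \<le> s" "s < t" "b + of_int k * p \<le> f s" for k s t
  proof (rule stays_above_level[OF der _ that])
    fix t assume "0 \<le> t" "f t = b + of_int k * p"
    then show "0 < w + c t * S (f t)"
      using drift(2)[OF \<open>0 \<le> t\<close>] by (simp add: plus_of_int)
  qed
  have apart: "b \<noteq> a + of_int k * p" for k
    using drift[of 0] plus_of_int[of a k] by auto
  show thesis
    by (rule oscillation_lt_period_between_periodic_levels[OF \<open>p > 0\<close> cont below above apart that])
qed

lemma continuous_attains_Inf_Sup:
  fixes g :: "'a::topological_space \<Rightarrow> real"
  assumes "compact K" "K \<noteq> {}" "continuous_on K g"
  obtains x y where "g x = Inf (g ` K)" "g y = Sup (g ` K)"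
proof -
  have "compact (g ` K)"
    using assms by (rule_tac compact_continuous_image)
  then have "Inf (g ` K) \<in> g ` K" "Sup (g ` K) \<in> g ` K"
    using \<open>K \<noteq> {}\<close> by (auto intro!: closed_contains_Inf closed_contains_Sup compact_imp_closed
        bounded_imp_bdd_below bounded_imp_bdd_above compact_imp_bounded)
  then show thesis
    using that by (metis imageE)
qed

lemma SUP_minus_INF_less:
  fixes g :: "'a \<Rightarrow> real"
  assumes "X \<noteq> {}" and bounds: "\<And>x. x \<in> X \<Longrightarrow> lo \<le> g x \<and> g x \<le> hi" and "hi - lo < d"
  shows "bdd_above (g ` X) \<and> bdd_below (g ` X) \<and> (SUP x\<in>X. g x) - (INF x\<in>X. g x) < d"
proof -
  have "(SUP x\<in>X. g x) \<le> hi"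
    by (rule cSUP_least) (use assms in auto)
  moreover have "lo \<le> (INF x\<in>X. g x)"
    by (rule cINF_greatest) (use assms in auto)
  moreover have "bdd_above (g ` X)" "bdd_below (g ` X)"
    using bounds by (auto intro!: bdd_aboveI2 bdd_belowI2)
  ultimately show ?thesis
    using \<open>hi - lo < d\<close> by simp
qed

lemma mean_coupling_dominates:
  fixes I :: "nat \<Rightarrow> real" and \<rho> \<kappa> m w W :: real
  assumes "N > 0" "\<rho> > 0" "m > 0" "\<And>j. \<rho> \<le> I j" "\<bar>w\<bar> \<le> W" "W / (\<rho> * m) < \<kappa>"
  shows "\<bar>w\<bar> < \<kappa> / real N * (\<Sum>j=1..N. I j) * m"
proof -
  have "\<bar>w\<bar> < \<kappa> * (\<rho> * m)"
    using assms(5,6) pos_divide_less_eq[OF mult_pos_pos[OF \<open>\<rho> > 0\<close> \<open>m > 0\<close>]] by simp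
  then have "0 < \<kappa> * (\<rho> * m)"
    using abs_ge_zero[of w] by linarith
  then have "\<kappa> > 0"
    using zero_less_mult_pos2 mult_pos_pos[OF \<open>\<rho> > 0\<close> \<open>m > 0\<close>] by blast
  have "real N * \<rho> \<le> (\<Sum>j=1..N. I j)"
    using sum_bounded_below[of "{1..N}" \<rho> I] assms(4) by simp
  then have "\<kappa> * \<rho> \<le> \<kappa> / real N * (\<Sum>j=1..N. I j)"
    using \<open>\<kappa> > 0\<close> \<open>N > 0\<close> by (simp add: field_simps)
  then have "\<kappa> * \<rho> * m \<le> \<kappa> / real N * (\<Sum>j=1..N. I j) * m"
    using \<open>m > 0\<close> by (intro mult_right_mono) auto
  then show ?thesis
    using \<open>\<bar>w\<bar> < \<kappa> * (\<rho> * m)\<close> by (simp add: mult.assoc)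
qed

theorem proposition4p2:
  fixes I S :: "real \<Rightarrow> real" and \<rho> \<kappa> :: real and N :: nat
    and \<omega> :: "nat \<Rightarrow> real" and \<theta>0 :: "nat \<Rightarrow> real"
    and \<theta> :: "nat \<Rightarrow> real \<Rightarrow> real" and B :: "nat set"
  assumes I_per: "\<And>x. I (x + 2 * pi) = I x"
    and S_per: "\<And>x. S (x + 2 * pi) = S x"
    and I_lip: "\<exists>L. L-lipschitz_on UNIV I"
    and S_lip: "\<exists>L. L-lipschitz_on UNIV S"
    and rho_pos: "\<rho> > 0"
    and I_ge: "\<And>x. I x \<ge> \<rho>"
    and S_min: "Inf (S ` {-pi..pi}) < 0"
    and S_max: "Sup (S ` {-pi..pi}) > 0"
    and ode: "\<And>i t. i \<in> {1..N} \<Longrightarrow> t \<ge> 0 \<Longrightarrow>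
        (\<theta> i has_real_derivative
           (\<omega> i + \<kappa> / real N * (\<Sum>j=1..N. I (\<theta> j t)) * S (\<theta> i t))) (at t within {0..})"
    and init: "\<And>i. i \<in> {1..N} \<Longrightarrow> \<theta> i 0 = \<theta>0 i"
    and B_sub: "B \<subseteq> {1..N}"
    and kappa: "\<kappa> > Max ((\<lambda>i. \<bar>\<omega> i\<bar>) ` B)
                  / (\<rho> * min (- Inf (S ` {-pi..pi})) (Sup (S ` {-pi..pi})))"
  shows "\<forall>i\<in>B. bdd_above (\<theta> i ` {0..}) \<and> bdd_below (\<theta> i ` {0..}) \<and>
           (SUP t\<in>{0..}. \<theta> i t) - (INF t\<in>{0..}. \<theta> i t) < 2 * pi"
proof
  fix i assume "i \<in> B"
  with B_sub have "i \<in> {1..N}" "finite B"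
    using finite_subset by auto
  define m where "m = min (- Inf (S ` {-pi..pi})) (Sup (S ` {-pi..pi}))"
  have "m > 0"
    using S_min S_max unfolding m_def by simp
  obtain L where "L-lipschitz_on UNIV S"
    using S_lip ..
  then have "continuous_on {-pi..pi} S"
    by (rule continuous_on_subset[OF lipschitz_on_continuous_on]) simp
  moreover have "{-pi..pi} \<noteq> {}"
    using pi_ge_zero by simp
  ultimately obtain a b where "S a = Inf (S ` {-pi..pi})" "S b = Sup (S ` {-pi..pi})"
    using continuous_attains_Inf_Sup[OF compact_Icc] by metis
  then have "S a \<le> - m" "m \<le> S b"
    unfolding m_def by auto
  have "0 < N" "\<bar>\<omega> i\<bar> \<le> Max ((\<lambda>i. \<bar>\<omega> i\<bar>) ` B)"
    using \<open>i \<in> {1..N}\<close> \<open>finite B\<close> \<open>i \<in> B\<close> by auto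
  then have dominates: "\<bar>\<omega> i\<bar> < \<kappa> / real N * (\<Sum>j=1..N. I (\<theta> j t)) * m" if "0 \<le> t" for t
    by (intro mean_coupling_dominates[OF _ rho_pos \<open>m > 0\<close> I_ge _ kappa[folded m_def]])
  have "0 < 2 * pi"
    using pi_gt_zero by simp
  then obtain lo hi where "hi - lo < 2 * pi" "\<And>t. 0 \<le> t \<Longrightarrow> lo \<le> \<theta> i t \<and> \<theta> i t \<le> hi"
    using oscillation_lt_period_of_periodic_drift[OF ode[OF \<open>i \<in> {1..N}\<close>] S_per
        _ \<open>m > 0\<close> \<open>S a \<le> - m\<close> \<open>m \<le> S b\<close> dominates] by blast
  then show "bdd_above (\<theta> i ` {0..}) \<and> bdd_below (\<theta> i ` {0..}) \<and>
      (SUP t\<in>{0..}. \<theta> i t) - (INF t\<in>{0..}. \<theta> i t) < 2 * pi"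
    by (intro SUP_minus_INF_less) auto
qed

end
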